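(* Let $f=(f_{ih})_{(i,h)\in S}\in C^1(U,\mathbb R^S)$ for some open $U\supset\Delta$ (here $f$ need not satisfy $\partial f_{ih}/\partial x_{ik}=0$). Then there exists a mutation limit $X\subset\Delta$, and it is contained in a connected component of the set $\mathcal N=\{x\in\Delta: g_{ih}(x)\le 0\ \forall (i,h)\in S\}$ of Nash equilibria.
   Context: Let $I=\{1,\dots,N\}$ be a finite set of populations; population $i$ has the finite type set $S_i=\{1,\dots,n_i\}$. Let $S=\{(i,h): i\in I, h\in S_i\}$, $\Delta_i=\{x_i\in\mathbb R^{n_i}_{\ge 0}:\sum_{h\le n_i}x_{ih}=1\}$, $\Delta=\prod_{i\in I}\Delta_i\subset\mathbb R^S$, and $\operatorname{int}\Delta=\{x\in\Delta: x_{ih}>0 \text{ for all }(i,h)\in S\}$. Put $\bar f_i(x)=\sum_{h\le n_i}x_{ih}f_{ih}(x)$ and $g_{ih}=f_{ih}-\bar f_i$. For $M\ge0$ and $c\in\operatorname{int}\Delta$ define $\phi^M_{ih}(x)=x_{ih}g_{ih}(x)+M(c_{ih}-x_{ih})$; a mutation equilibrium for $M$ (w.r.t. $c$) is $x\in\Delta$ with $\phi^M(x)=0$. A sequence of mutation equilibria for $c$ is a sequence $(x_n)\subset\Delta$ for which there are $M_n>0$, $M_n\to0$, with $\phi^{M_n}(x_n)=0$ for all $n$. A mutation limit is a nonempty connected compact set $X\subset\Delta$ such that for every $c\in\operatorname{int}\Delta$ there is a sequence of mutation equilibria for $c$ converging to an element of $X$, and no proper subset of $X$ is a connected compact set with this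 property. *)

theory Defs
  imports "HOL-Analysis.Analysis"
begin

text \<open>Encoding: the finite set of pure strategies S = {(i,h)} is a finite type 's;
  the population map pop :: 's => 'i assigns to each type (i,h) its population i.\<close>

definition pstate :: "('s::finite \<Rightarrow> 'i) \<Rightarrow> (real^'s) set" where
  "pstate pop = {x. (\<forall>s. 0 \<le> x$s) \<and> (\<forall>i. (\<Sum>s\<in>{s. pop s = i}. x$s) = 1)}"

definition pstate_int :: "('s::finite \<Rightarrow> 'i) \<Rightarrow> (real^'s) set" where
  "pstate_int pop = {x \<in> pstate pop. \<forall>s. 0 < x$s}"

definition avg_payoff :: "('s::finite \<Rightarrow> 'i) \<Rightarrow> (real^'s \<Rightarrow> real^'s) \<Rightarrow> 'i \<Rightarrow> real^'s \<Rightarrow> real" where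
  "avg_payoff pop f i x = (\<Sum>s\<in>{s. pop s = i}. x$s * f x $ s)"

definition gexcess :: "('s::finite \<Rightarrow> 'i) \<Rightarrow> (real^'s \<Rightarrow> real^'s) \<Rightarrow> 's \<Rightarrow> real^'s \<Rightarrow> real" where
  "gexcess pop f s x = f x $ s - avg_payoff pop f (pop s) x"

definition mut_field :: "('s::finite \<Rightarrow> 'i) \<Rightarrow> (real^'s \<Rightarrow> real^'s) \<Rightarrow> real \<Rightarrow> real^'s \<Rightarrow> real^'s \<Rightarrow> real^'s" where
  "mut_field pop f M c x = (\<chi> s. x$s * gexcess pop f s x + M * (c$s - x$s))"

definition mutation_eq_seq :: "('s::finite \<Rightarrow> 'i) \<Rightarrow> (real^'s \<Rightarrow> real^'s) \<Rightarrow> real^'s \<Rightarrow> (nat \<Rightarrow> real^'s) \<Rightarrow> bool" where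
  "mutation_eq_seq pop f c xs \<longleftrightarrow>
     (\<forall>n. xs n \<in> pstate pop) \<and>
     (\<exists>Ms :: nat \<Rightarrow> real. (\<forall>n. 0 < Ms n) \<and> Ms \<longlonglongrightarrow> 0 \<and>
        (\<forall>n. mut_field pop f (Ms n) c (xs n) = 0))"

definition approachable :: "('s::finite \<Rightarrow> 'i) \<Rightarrow> (real^'s \<Rightarrow> real^'s) \<Rightarrow> (real^'s) set \<Rightarrow> bool" where
  "approachable pop f X \<longleftrightarrow>
     (\<forall>c \<in> pstate_int pop. \<exists>xs. mutation_eq_seq pop f c xs \<and> (\<exists>x\<in>X. xs \<longlonglongrightarrow> x))"

definition mutation_limit :: "('s::finite \<Rightarrow> 'i) \<Rightarrow> (real^'s \<Rightarrow> real^'s) \<Rightarrow> (real^'s) set \<Rightarrow> bool" where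
  "mutation_limit pop f X \<longleftrightarrow>
     X \<noteq> {} \<and> connected X \<and> compact X \<and> X \<subseteq> pstate pop \<and> approachable pop f X \<and>
     (\<forall>Y. Y \<subset> X \<and> connected Y \<and> compact Y \<longrightarrow> \<not> approachable pop f Y)"

definition nash_set :: "('s::finite \<Rightarrow> 'i) \<Rightarrow> (real^'s \<Rightarrow> real^'s) \<Rightarrow> (real^'s) set" where
  "nash_set pop f = {x \<in> pstate pop. \<forall>s. gexcess pop f s x \<le> 0}"

end

theory Submission
  imports Defs
begin

text \<open>
  For a continuous map \<open>m\<close> from \<open>\<Delta>\<close> into \<open>int \<Delta>\<close>, mutation towards the state-dependent
  target \<open>m x\<close> still has equilibria for every \<open>M > 0\<close> (Brouwer), and every limit of them as
  \<open>M \<rightarrow> 0\<close> is a Nash equilibrium, since positivity of \<open>m\<close> forces \<open>g\<^sub>i\<^sub>h \<le> M\<close> at an equilibrium.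
  These limit sets \<open>L(m)\<close> are closed, so Zorn's lemma gives a minimal nonempty compact
  \<open>X\<^sub>0 \<subseteq> \<N>\<close> meeting all of them. \<open>X\<^sub>0\<close> is connected: if it split into disjoint closed
  \<open>A\<close> and \<open>B\<close>, minimality would give targets \<open>m\<^sub>1\<close>, \<open>m\<^sub>2\<close> whose limit sets miss \<open>A\<close> and \<open>B\<close>,
  and gluing them by a cutoff that is \<open>1\<close> near \<open>A\<close> and \<open>0\<close> near \<open>B\<close> gives a target whose
  limit set misses \<open>X\<^sub>0\<close>, because \<open>L(m)\<close> only depends on \<open>m\<close> near its points.
  Constant targets are the mutations of the definition, so \<open>X\<^sub>0\<close> is approachable, and a
  second application of Zorn's lemma, now among connected compact sets, yields a mutation
  limit inside \<open>X\<^sub>0\<close>.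
\<close>

lemma exists_minimal_compact_meeting:
  fixes K :: "'a::heine_borel set" and \<L> :: "'a set set"
  assumes "compact K" "K \<noteq> {}" "Q K"
    and closed: "\<And>L. L \<in> \<L> \<Longrightarrow> closed L"
    and meets: "\<And>L. L \<in> \<L> \<Longrightarrow> K \<inter> L \<noteq> {}"
    and Q_Inter: "\<And>\<F>. \<F> \<noteq> {} \<Longrightarrow> (\<And>S. S \<in> \<F> \<Longrightarrow> compact S \<and> Q S) \<Longrightarrow>
                   (\<And>S T. S \<in> \<F> \<Longrightarrow> T \<in> \<F> \<Longrightarrow> S \<subseteq> T \<or> T \<subseteq> S) \<Longrightarrow> Q (\<Inter>\<F>)"
  obtains X where "X \<subseteq> K" "X \<noteq> {}" "compact X" "Q X" "\<And>L. L \<in> \<L> \<Longrightarrow> X \<inter> L \<noteq> {}"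
    "\<And>Y. Y \<subseteq> X \<Longrightarrow> Y \<noteq> {} \<Longrightarrow> compact Y \<Longrightarrow> Q Y \<Longrightarrow> (\<forall>L\<in>\<L>. Y \<inter> L \<noteq> {}) \<Longrightarrow> Y = X"
proof -
  define \<A> where "\<A> = {X. X \<subseteq> K \<and> X \<noteq> {} \<and> compact X \<and> Q X \<and> (\<forall>L\<in>\<L>. X \<inter> L \<noteq> {})}"
  have "\<exists>X\<in>\<A>. \<forall>Y\<in>\<A>. X \<supseteq> Y \<longrightarrow> Y = X"
  proof (rule predicate_Zorn)
    show "partial_order_on \<A> (relation_of (\<supseteq>) \<A>)"
      by (rule partial_order_on_relation_ofI) auto
  next
    fix \<C> assume "\<C> \<in> Chains (relation_of (\<supseteq>) \<A>)"
    then have sub: "\<C> \<subseteq> \<A>" and chain: "\<And>S T. S \<in> \<C> \<Longrightarrow> T \<in> \<C> \<Longrightarrow> S \<subseteq> T \<or> T \<subseteq> S"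
      by (auto simp: Chains_def relation_of_def)
    show "\<exists>X\<in>\<A>. \<forall>S\<in>\<C>. S \<supseteq> X"
    proof (cases "\<C> = {}")
      case True
      then show ?thesis using assms meets by (auto simp: \<A>_def)
    next
      case False
      have cpt: "compact S" if "S \<in> \<C>" for S using sub that by (auto simp: \<A>_def)
      have "\<Inter>\<C> \<inter> L \<noteq> {}" if "L \<in> \<L>" for L
      proof -
        have "\<Inter>((\<lambda>S. S \<inter> L) ` \<C>) \<noteq> {}"
        proof (rule compact_chain)
          show "compact S'" if "S' \<in> (\<lambda>S. S \<inter> L) ` \<C>" for S'
            using that cpt closed[OF \<open>L \<in> \<L>\<close>] by (auto intro: compact_Int_closed)
          show "{} \<notin> (\<lambda>S. S \<inter> L) ` \<C>" using sub \<open>L \<in> \<L>\<close> by (auto simp: \<A>_def)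
        qed (use chain in blast)
        then show ?thesis using False by auto
      qed
      moreover have "\<Inter>\<C> \<noteq> {}"
        using sub chain cpt by (intro compact_chain) (auto simp: \<A>_def)
      moreover have "compact (\<Inter>\<C>)"
        using False cpt by (blast intro: compact_Inter)
      moreover have "Q (\<Inter>\<C>)"
        using False sub chain by (intro Q_Inter) (auto simp: \<A>_def)
      moreover have "\<Inter>\<C> \<subseteq> K"
        using False sub unfolding \<A>_def by blast
      ultimately have "\<Inter>\<C> \<in> \<A>" by (simp add: \<A>_def)
      then show ?thesis by blast
    qed
  qed
  then obtain X where "X \<in> \<A>" "\<And>Y. Y \<in> \<A> \<Longrightarrow> Y \<subseteq> X \<Longrightarrow> Y = X"
    by blast
  then show ?thesis
    by (intro that[of X]) (auto simp: \<A>_def)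
qed

lemma Urysohn_open_neighbourhoods:
  fixes A B :: "'a::metric_space set"
  assumes "compact A" "closed B" "A \<noteq> {}" "B \<noteq> {}" "A \<inter> B = {}"
  obtains \<rho> :: "'a \<Rightarrow> real" and U V where "continuous_on UNIV \<rho>" "\<And>x. 0 \<le> \<rho> x \<and> \<rho> x \<le> 1"
    "open U" "A \<subseteq> U" "\<And>x. x \<in> U \<Longrightarrow> \<rho> x = 1"
    "open V" "B \<subseteq> V" "\<And>x. x \<in> V \<Longrightarrow> \<rho> x = 0"
proof -
  define d where "d = setdist A B"
  have "0 < d"
    using assms by (simp add: d_def setdist_gt_0_compact_closed)
  define \<rho> where "\<rho> x = max 0 (min 1 (2 - 3 * infdist x A / d))" for x
  define U where "U = {x. infdist x A < d / 3}"
  define V where "V = {x. 2 * d / 3 < infdist x A}"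
  have "continuous_on UNIV \<rho>"
    unfolding \<rho>_def by (intro continuous_intros) (use \<open>0 < d\<close> in auto)
  moreover have "0 \<le> \<rho> x \<and> \<rho> x \<le> 1" for x
    by (simp add: \<rho>_def)
  moreover have "open U" "open V"
    unfolding U_def V_def by (intro open_Collect_less continuous_intros)+
  moreover have "A \<subseteq> U"
    using \<open>0 < d\<close> by (auto simp: U_def)
  moreover have "B \<subseteq> V"
  proof
    fix x assume "x \<in> B"
    then have "d \<le> infdist x A"
      using setdist_subset_left[of "{x}" B A] by (simp add: d_def infdist_eq_setdist setdist_sym)
    then show "x \<in> V"
      using \<open>0 < d\<close> by (simp add: V_def)
  qed
  moreover have "\<rho> x = 1" if "x \<in> U" for x
    using that \<open>0 < d\<close> by (simp add: \<rho>_def U_def field_simps)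
  moreover have "\<rho> x = 0" if "x \<in> V" for x
    using that \<open>0 < d\<close> by (simp add: \<rho>_def V_def field_simps)
  ultimately show ?thesis
    by (intro that[of \<rho> U V])
qed

definition limits_at_zero :: "(real \<Rightarrow> 'a::topological_space \<Rightarrow> bool) \<Rightarrow> 'a set" where
  "limits_at_zero Z =
     {x. \<exists>xs Ms. (\<forall>n. 0 < Ms n \<and> Z (Ms n) (xs n)) \<and> Ms \<longlonglongrightarrow> 0 \<and> xs \<longlonglongrightarrow> x}"

lemma limits_at_zero_eq_closure:
  fixes Z :: "real \<Rightarrow> 'a::first_countable_topology \<Rightarrow> bool"
  shows "limits_at_zero Z = {x. (x, 0) \<in> closure {(y, M). 0 < M \<and> Z M y}}"
proof -
  have "(\<exists>p. (\<forall>n. p n \<in> {(y, M). 0 < M \<and> Z M y}) \<and> p \<longlonglongrightarrow> (x, 0)) \<longleftrightarrow>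
        (\<exists>xs Ms. (\<forall>n. 0 < Ms n \<and> Z (Ms n) (xs n)) \<and> Ms \<longlonglongrightarrow> 0 \<and> xs \<longlonglongrightarrow> x)" for x
  proof
    assume "\<exists>p. (\<forall>n. p n \<in> {(y, M). 0 < M \<and> Z M y}) \<and> p \<longlonglongrightarrow> (x, 0)"
    then obtain p where "\<forall>n. p n \<in> {(y, M). 0 < M \<and> Z M y}" "p \<longlonglongrightarrow> (x, 0)" by blast
    then show "\<exists>xs Ms. (\<forall>n. 0 < Ms n \<and> Z (Ms n) (xs n)) \<and> Ms \<longlonglongrightarrow> 0 \<and> xs \<longlonglongrightarrow> x"
      by (intro exI[of _ "\<lambda>n. fst (p n)"] exI[of _ "\<lambda>n. snd (p n)"])
         (auto dest: tendsto_fst tendsto_snd simp: case_prod_beta)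
  next
    assume "\<exists>xs Ms. (\<forall>n. 0 < Ms n \<and> Z (Ms n) (xs n)) \<and> Ms \<longlonglongrightarrow> 0 \<and> xs \<longlonglongrightarrow> x"
    then obtain xs Ms where "\<forall>n. 0 < Ms n \<and> Z (Ms n) (xs n)" "Ms \<longlonglongrightarrow> 0" "xs \<longlonglongrightarrow> x"
      by blast
    then show "\<exists>p. (\<forall>n. p n \<in> {(y, M). 0 < M \<and> Z M y}) \<and> p \<longlonglongrightarrow> (x, 0)"
      by (intro exI[of _ "\<lambda>n. (xs n, Ms n)"]) (auto intro: tendsto_Pair)
  qed
  then show ?thesis
    unfolding limits_at_zero_def closure_sequential by blast
qed

lemma closed_limits_at_zero:
  fixes Z :: "real \<Rightarrow> 'a::first_countable_topology \<Rightarrow> bool"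
  shows "closed (limits_at_zero Z)"
proof -
  have "closed ((\<lambda>x. (x, 0::real)) -` closure {(y, M). 0 < M \<and> Z M y})"
    by (intro continuous_closed_vimage closed_closure continuous_intros)
  then show ?thesis
    by (simp add: limits_at_zero_eq_closure vimage_def)
qed

lemma limits_at_zero_local:
  fixes Z Z' :: "real \<Rightarrow> 'a::first_countable_topology \<Rightarrow> bool"
  assumes "open V" "x \<in> V" and agree: "\<And>M y. 0 < M \<Longrightarrow> y \<in> V \<Longrightarrow> Z M y \<longleftrightarrow> Z' M y"
    and "x \<in> limits_at_zero Z"
  shows "x \<in> limits_at_zero Z'"
proof -
  let ?G = "\<lambda>Z. {(y, M::real). 0 < M \<and> Z M y}"
  have "(x, 0) \<in> (V \<times> UNIV) \<inter> closure (?G Z)"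
    using assms by (simp add: limits_at_zero_eq_closure)
  also have "\<dots> \<subseteq> closure ((V \<times> UNIV) \<inter> ?G Z)"
    using \<open>open V\<close> by (intro open_Int_closure_subset open_Times) auto
  also have "(V \<times> UNIV) \<inter> ?G Z = (V \<times> UNIV) \<inter> ?G Z'"
    using agree by auto
  also have "closure \<dots> \<subseteq> closure (?G Z')"
    by (intro closure_mono) auto
  finally show ?thesis
    by (simp add: limits_at_zero_eq_closure)
qed

lemma limits_at_zero_meets_compact:
  fixes Z :: "real \<Rightarrow> 'a::metric_space \<Rightarrow> bool"
  assumes "compact K" and sol: "\<And>M. 0 < M \<Longrightarrow> \<exists>y\<in>K. Z M y"
  shows "limits_at_zero Z \<inter> K \<noteq> {}"
proof -
  have "\<forall>n. \<exists>y. y \<in> K \<and> Z (1 / Suc n) y"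
  proof
    fix n :: nat
    have "0 < 1 / real (Suc n)" by simp
    then show "\<exists>y. y \<in> K \<and> Z (1 / Suc n) y" using sol by blast
  qed
  then obtain ys where ys: "\<And>n. ys n \<in> K \<and> Z (1 / Suc n) (ys n)"
    unfolding choice_iff by blast
  then obtain l r where "l \<in> K" "strict_mono r" "(ys \<circ> r) \<longlonglongrightarrow> l"
    using \<open>compact K\<close> unfolding compact_def by metis
  moreover have "(\<lambda>n. 1 / real (Suc (r n))) \<longlonglongrightarrow> 0"
    using LIMSEQ_subseq_LIMSEQ[OF LIMSEQ_inverse_real_of_nat \<open>strict_mono r\<close>]
    by (simp add: o_def inverse_eq_divide)
  ultimately have "l \<in> limits_at_zero Z"
    unfolding limits_at_zero_def using ys
    by (intro CollectI exI[of _ "ys \<circ> r"] exI[of _ "\<lambda>n. 1 / real (Suc (r n))"]) auto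
  with \<open>l \<in> K\<close> show ?thesis by blast
qed

lemma closed_pstate: "closed (pstate (pop :: 's::finite \<Rightarrow> 'i))"
proof -
  have "pstate pop = (\<Inter>s. {x. 0 \<le> x$s}) \<inter> (\<Inter>i. {x::real^'s. (\<Sum>s\<in>{s. pop s = i}. x$s) = 1})"
    unfolding pstate_def by auto
  then show ?thesis
    by (auto intro!: closed_Int closed_INT closed_Collect_le closed_Collect_eq continuous_intros)
qed

lemma pstate_component_le_1:
  assumes "x \<in> pstate pop"
  shows "x$s \<le> 1"
proof -
  have "x$s \<le> (\<Sum>t\<in>{t. pop t = pop s}. x$t)"
    using assms by (intro member_le_sum) (auto simp: pstate_def)
  also have "\<dots> = 1"
    using assms by (simp add: pstate_def)
  finally show ?thesis .
qed

lemma compact_pstate: "compact (pstate (pop :: 's::finite \<Rightarrow> 'i))"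
proof -
  have "pstate pop \<subseteq> cbox 0 1"
    by (auto simp: mem_box_cart pstate_component_le_1) (auto simp: pstate_def)
  then show ?thesis
    by (metis closed_pstate compact_Int_closed compact_cbox inf.absorb_iff2)
qed

lemma convex_pstate: "convex (pstate (pop :: 's::finite \<Rightarrow> 'i))"
proof (rule convexI)
  fix x y :: "real^'s" and u v :: real
  assume x: "x \<in> pstate pop" and y: "y \<in> pstate pop" and uv: "0 \<le> u" "0 \<le> v" "u + v = 1"
  have "(\<Sum>s\<in>{s. pop s = i}. (u *\<^sub>R x + v *\<^sub>R y) $ s)
      = u * (\<Sum>s\<in>{s. pop s = i}. x $ s) + v * (\<Sum>s\<in>{s. pop s = i}. y $ s)" for i
    by (simp add: sum.distrib sum_distrib_left)
  then show "u *\<^sub>R x + v *\<^sub>R y \<in> pstate pop"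
    using x y uv by (simp add: pstate_def)
qed

lemma convex_pstate_int: "convex (pstate_int (pop :: 's::finite \<Rightarrow> 'i))"
proof (rule convexI)
  fix x y :: "real^'s" and u v :: real
  assume x: "x \<in> pstate_int pop" and y: "y \<in> pstate_int pop" and uv: "0 \<le> u" "0 \<le> v" "u + v = 1"
  have "u *\<^sub>R x + v *\<^sub>R y \<in> pstate pop"
    using x y uv convex_pstate by (auto simp: pstate_int_def dest: convexD)
  moreover have "0 < u * x$s + v * y$s" for s
  proof (cases "u = 0")
    case True
    then show ?thesis using y uv by (simp add: pstate_int_def)
  next
    case False
    then have "0 < u * x$s" using x uv by (simp add: pstate_int_def)
    moreover have "0 \<le> v * y$s" using y uv by (simp add: pstate_int_def less_imp_le)
    ultimately show ?thesis by simp
  qed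
  ultimately show "u *\<^sub>R x + v *\<^sub>R y \<in> pstate_int pop"
    by (simp add: pstate_int_def)
qed

definition uniform_state :: "('s::finite \<Rightarrow> 'i) \<Rightarrow> real^'s" where
  "uniform_state pop = (\<chi> s. 1 / real (card {t. pop t = pop s}))"

lemma uniform_state_in_pstate_int:
  assumes "surj pop"
  shows "uniform_state pop \<in> pstate_int pop"
proof -
  have card: "0 < card {t. pop t = i}" for i
    using surjD[OF assms, of i] by (auto simp: card_gt_0_iff)
  have "(\<Sum>s\<in>{s. pop s = i}. uniform_state pop $ s) = 1" for i
  proof -
    have "(\<Sum>s\<in>{s. pop s = i}. uniform_state pop $ s)
        = (\<Sum>s\<in>{s. pop s = i}. 1 / real (card {t. pop t = i}))"
      by (rule sum.cong) (auto simp: uniform_state_def)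
    then show ?thesis using card[of i] surjD[OF assms, of i] by auto
  qed
  moreover have "0 < uniform_state pop $ s" for s
    using card[of "pop s"] by (simp add: uniform_state_def)
  ultimately show ?thesis
    by (auto simp: pstate_int_def pstate_def less_imp_le)
qed

lemma pstate_int_nonempty: "surj pop \<Longrightarrow> pstate_int pop \<noteq> {}"
  using uniform_state_in_pstate_int by blast

lemma pstate_nonempty: "surj pop \<Longrightarrow> pstate pop \<noteq> {}"
  using pstate_int_nonempty by (auto simp: pstate_int_def)

lemma sum_mult_gexcess:
  assumes "x \<in> pstate pop"
  shows "(\<Sum>s\<in>{s. pop s = i}. x$s * gexcess pop f s x) = 0"
proof -
  have "(\<Sum>s\<in>{s. pop s = i}. x$s * gexcess pop f s x)
      = avg_payoff pop f i x - (\<Sum>s\<in>{s. pop s = i}. x$s) * avg_payoff pop f i x"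
    by (simp add: gexcess_def avg_payoff_def right_diff_distrib sum_subtractf sum_distrib_right)
  also have "\<dots> = 0"
    using assms by (simp add: pstate_def)
  finally show ?thesis .
qed

lemma continuous_on_gexcess:
  "continuous_on S f \<Longrightarrow> continuous_on S (gexcess pop f s)"
  unfolding gexcess_def[abs_def] avg_payoff_def by (intro continuous_intros)

lemma gexcess_bounded:
  fixes pop :: "'s::finite \<Rightarrow> 'i"
  assumes "continuous_on (pstate pop) f"
  obtains B where "0 \<le> B" "\<And>s y. y \<in> pstate pop \<Longrightarrow> \<bar>gexcess pop f s y\<bar> \<le> B"
proof -
  let ?g = "\<lambda>y. \<chi> s. gexcess pop f s y"
  have "compact (?g ` pstate pop)"
    using assms by (intro compact_continuous_image compact_pstate)
      (auto intro!: continuous_on_vec_lambda continuous_on_gexcess)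
  then have "bounded (?g ` pstate pop)"
    by (rule compact_imp_bounded)
  then obtain B where "0 < B" and B: "\<And>z. z \<in> ?g ` pstate pop \<Longrightarrow> norm z \<le> B"
    by (auto simp: bounded_pos)
  show ?thesis
  proof (rule that)
    show "0 \<le> B" using \<open>0 < B\<close> by simp
    show "\<bar>gexcess pop f s y\<bar> \<le> B" if "y \<in> pstate pop" for s y
      using component_le_norm_cart[of "?g y" s] B[of "?g y"] that by simp
  qed
qed

lemma compact_nash_set:
  assumes "continuous_on (pstate pop) f"
  shows "compact (nash_set pop f)"
proof -
  have "nash_set pop f = pstate pop \<inter> (\<Inter>s. {x\<in>pstate pop. gexcess pop f s x \<le> 0})"
    by (auto simp: nash_set_def)
  moreover have "closed (\<Inter>s. {x\<in>pstate pop. gexcess pop f s x \<le> 0})"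
    by (intro closed_INT ballI continuous_on_closed_Collect_le[OF continuous_on_gexcess[OF assms]
          continuous_on_const closed_pstate])
  ultimately show ?thesis
    by (simp add: compact_Int_closed compact_pstate)
qed

definition mut_field_map ::
    "('s::finite \<Rightarrow> 'i) \<Rightarrow> (real^'s \<Rightarrow> real^'s) \<Rightarrow> real \<Rightarrow> (real^'s \<Rightarrow> real^'s) \<Rightarrow> real^'s \<Rightarrow> real^'s" where
  "mut_field_map pop f M m x = (\<chi> s. x$s * gexcess pop f s x + M * (m x $ s - x$s))"

lemma mut_field_map_const: "mut_field_map pop f M (\<lambda>_. c) = mut_field pop f M c"
  by (simp add: mut_field_map_def mut_field_def fun_eq_iff)

lemma euler_step_mut_field_map_in_pstate:
  assumes y: "y \<in> pstate pop" and my: "m y \<in> pstate pop"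
    and B: "\<And>s. \<bar>gexcess pop f s y\<bar> \<le> B" and "0 \<le> M" "0 \<le> e" "e * (B + M) \<le> 1"
  shows "y + e *\<^sub>R mut_field_map pop f M m y \<in> pstate pop"
proof -
  let ?T = "y + e *\<^sub>R mut_field_map pop f M m y"
  have T: "?T $ s = y$s * (1 + e * gexcess pop f s y - e * M) + e * M * m y $ s" for s
    by (simp add: mut_field_map_def algebra_simps)
  have "0 \<le> ?T $ s" for s
  proof -
    have "e * (- gexcess pop f s y) \<le> e * B"
      using B[of s] \<open>0 \<le> e\<close> by (intro mult_left_mono) auto
    then have "0 \<le> 1 + e * gexcess pop f s y - e * M"
      using \<open>e * (B + M) \<le> 1\<close> by (simp add: algebra_simps)
    then show ?thesis
      unfolding T using y my \<open>0 \<le> M\<close> \<open>0 \<le> e\<close> by (simp add: pstate_def)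
  qed
  moreover have "(\<Sum>s\<in>{s. pop s = i}. ?T $ s) = 1" for i
  proof -
    have "(\<Sum>s\<in>{s. pop s = i}. ?T $ s) = (\<Sum>s\<in>{s. pop s = i}. y$s)
        + e * (\<Sum>s\<in>{s. pop s = i}. y$s * gexcess pop f s y)
        + e * M * ((\<Sum>s\<in>{s. pop s = i}. m y $ s) - (\<Sum>s\<in>{s. pop s = i}. y$s))"
      by (simp add: mut_field_map_def sum.distrib sum_subtractf sum_distrib_left algebra_simps)
    then show ?thesis
      using y my sum_mult_gexcess[OF y] by (simp add: pstate_def)
  qed
  ultimately show ?thesis
    by (simp add: pstate_def)
qed

lemma mut_field_map_has_zero:
  fixes pop :: "'s::finite \<Rightarrow> 'i"
  assumes "surj pop" and f: "continuous_on (pstate pop) f"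
    and m: "continuous_on (pstate pop) m" "\<And>x. x \<in> pstate pop \<Longrightarrow> m x \<in> pstate pop"
    and "0 < M"
  shows "\<exists>y\<in>pstate pop. mut_field_map pop f M m y = 0"
proof -
  obtain B where "0 \<le> B" and B: "\<And>s y. y \<in> pstate pop \<Longrightarrow> \<bar>gexcess pop f s y\<bar> \<le> B"
    using gexcess_bounded[OF f] by blast
  define e where "e = 1 / (B + M + 1)"
  have "0 < e" "e * (B + M) \<le> 1"
    using \<open>0 \<le> B\<close> \<open>0 < M\<close> by (auto simp: e_def field_simps)
  define T where "T y = y + e *\<^sub>R mut_field_map pop f M m y" for y
  have "continuous_on (pstate pop) T"
    unfolding T_def mut_field_map_def
    by (intro continuous_intros continuous_on_gexcess f m)
  moreover have "T ` pstate pop \<subseteq> pstate pop"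
    using B m(2) \<open>0 < M\<close> \<open>0 < e\<close> \<open>e * (B + M) \<le> 1\<close>
    by (auto simp: T_def intro!: euler_step_mut_field_map_in_pstate)
  ultimately obtain y where "y \<in> pstate pop" "T y = y"
    using brouwer[OF compact_pstate convex_pstate pstate_nonempty[OF \<open>surj pop\<close>]] by blast
  then show ?thesis
    using \<open>0 < e\<close> by (auto simp: T_def)
qed

definition mut_zero_limits ::
    "('s::finite \<Rightarrow> 'i) \<Rightarrow> (real^'s \<Rightarrow> real^'s) \<Rightarrow> (real^'s \<Rightarrow> real^'s) \<Rightarrow> (real^'s) set" where
  "mut_zero_limits pop f m = limits_at_zero (\<lambda>M y. y \<in> pstate pop \<and> mut_field_map pop f M m y = 0)"

lemma closed_mut_zero_limits: "closed (mut_zero_limits pop f m)"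
  unfolding mut_zero_limits_def by (rule closed_limits_at_zero)

lemma approachable_iff_meets_mut_zero_limits:
  "approachable pop f X \<longleftrightarrow> (\<forall>c\<in>pstate_int pop. X \<inter> mut_zero_limits pop f (\<lambda>_. c) \<noteq> {})"
  unfolding approachable_def mutation_eq_seq_def mut_zero_limits_def limits_at_zero_def
    mut_field_map_const
  by (intro ball_cong refl) blast

lemma mut_zero_limits_local:
  assumes "open V" "x \<in> V" "\<And>y. y \<in> V \<Longrightarrow> m y = m' y" "x \<in> mut_zero_limits pop f m"
  shows "x \<in> mut_zero_limits pop f m'"
  using assms unfolding mut_zero_limits_def
  by (elim limits_at_zero_local) (simp_all add: mut_field_map_def)

definition mutation_targets :: "('s::finite \<Rightarrow> 'i) \<Rightarrow> (real^'s \<Rightarrow> real^'s) set" where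
  "mutation_targets pop = {m. continuous_on (pstate pop) m \<and> m ` pstate pop \<subseteq> pstate_int pop}"

lemma const_in_mutation_targets: "c \<in> pstate_int pop \<Longrightarrow> (\<lambda>_. c) \<in> mutation_targets pop"
  by (auto simp: mutation_targets_def)

lemma mut_zero_limits_subset_nash_set:
  assumes f: "continuous_on (pstate pop) f" and m: "m \<in> mutation_targets pop"
  shows "mut_zero_limits pop f m \<subseteq> nash_set pop f"
proof
  fix x assume "x \<in> mut_zero_limits pop f m"
  then obtain xs Ms where Ms: "\<And>n. 0 < Ms n" "Ms \<longlonglongrightarrow> 0" and xs: "xs \<longlonglongrightarrow> x"
      "\<And>n. xs n \<in> pstate pop" "\<And>n. mut_field_map pop f (Ms n) m (xs n) = 0"
    unfolding mut_zero_limits_def limits_at_zero_def by blast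
  have "x \<in> pstate pop"
    using closed_sequentially[OF closed_pstate xs(2) xs(1)] .
  moreover have "gexcess pop f s x \<le> 0" for s
  proof -
    have "gexcess pop f s (xs n) \<le> Ms n" for n
    proof (rule ccontr)
      assume "\<not> ?thesis"
      then have "0 \<le> xs n $ s * (gexcess pop f s (xs n) - Ms n)"
        using xs(2)[of n] by (intro mult_nonneg_nonneg) (auto simp: pstate_def)
      moreover have "0 < Ms n * m (xs n) $ s"
        using Ms(1)[of n] m xs(2)[of n] by (auto simp: mutation_targets_def pstate_int_def)
      moreover have "xs n $ s * gexcess pop f s (xs n) + Ms n * (m (xs n) $ s - xs n $ s) = 0"
        using xs(3)[of n] by (simp add: mut_field_map_def vec_eq_iff)
      ultimately show False
        by (simp add: algebra_simps)
    qed
    moreover have "(\<lambda>n. gexcess pop f s (xs n)) \<longlonglongrightarrow> gexcess pop f s x"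
      by (rule continuous_on_tendsto_compose[OF continuous_on_gexcess[OF f] xs(1) \<open>x \<in> pstate pop\<close>])
        (simp add: xs(2))
    ultimately show ?thesis
      using Ms(2) by (intro LIMSEQ_le) auto
  qed
  ultimately show "x \<in> nash_set pop f"
    by (simp add: nash_set_def)
qed

lemma mut_zero_limits_meets_nash_set:
  assumes "surj pop" and f: "continuous_on (pstate pop) f" and m: "m \<in> mutation_targets pop"
  shows "nash_set pop f \<inter> mut_zero_limits pop f m \<noteq> {}"
proof -
  have "\<exists>y\<in>pstate pop. mut_field_map pop f M m y = 0" if "0 < M" for M
    using m that by (intro mut_field_map_has_zero[OF \<open>surj pop\<close> f])
      (auto simp: mutation_targets_def pstate_int_def)
  then have "mut_zero_limits pop f m \<inter> pstate pop \<noteq> {}"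
    unfolding mut_zero_limits_def by (intro limits_at_zero_meets_compact compact_pstate) auto
  then show ?thesis
    using mut_zero_limits_subset_nash_set[OF f m] by blast
qed

lemma mut_zero_limits_glue:
  fixes pop :: "'s::finite \<Rightarrow> 'i"
  assumes m1: "m1 \<in> mutation_targets pop" and m2: "m2 \<in> mutation_targets pop"
    and AB: "compact A" "closed B" "A \<noteq> {}" "B \<noteq> {}" "A \<inter> B = {}"
  obtains m where "m \<in> mutation_targets pop"
    "A \<inter> mut_zero_limits pop f m \<subseteq> mut_zero_limits pop f m1"
    "B \<inter> mut_zero_limits pop f m \<subseteq> mut_zero_limits pop f m2"
proof -
  obtain \<rho> :: "real^'s \<Rightarrow> real" and U V where \<rho>: "continuous_on UNIV \<rho>" "\<And>x. 0 \<le> \<rho> x \<and> \<rho> x \<le> 1"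
    and U: "open U" "A \<subseteq> U" "\<And>x. x \<in> U \<Longrightarrow> \<rho> x = 1"
    and V: "open V" "B \<subseteq> V" "\<And>x. x \<in> V \<Longrightarrow> \<rho> x = 0"
    using Urysohn_open_neighbourhoods[OF AB] by blast
  define m where "m x = \<rho> x *\<^sub>R m1 x + (1 - \<rho> x) *\<^sub>R m2 x" for x
  have "continuous_on (pstate pop) m"
    using m1 m2 continuous_on_subset[OF \<rho>(1)]
    unfolding m_def mutation_targets_def by (intro continuous_intros) auto
  moreover have "m x \<in> pstate_int pop" if "x \<in> pstate pop" for x
    using m1 m2 that \<rho>(2)[of x]
    unfolding m_def mutation_targets_def by (intro convexD[OF convex_pstate_int]) auto
  ultimately have "m \<in> mutation_targets pop"
    by (auto simp: mutation_targets_def)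
  moreover have "m y = m1 y" if "y \<in> U" for y
    using U(3)[OF that] by (simp add: m_def)
  then have "A \<inter> mut_zero_limits pop f m \<subseteq> mut_zero_limits pop f m1"
    using U(2) by (blast intro: mut_zero_limits_local[OF \<open>open U\<close>])
  moreover have "m y = m2 y" if "y \<in> V" for y
    using V(3)[OF that] by (simp add: m_def)
  then have "B \<inter> mut_zero_limits pop f m \<subseteq> mut_zero_limits pop f m2"
    using V(2) by (blast intro: mut_zero_limits_local[OF \<open>open V\<close>])
  ultimately show ?thesis
    using that by blast
qed

lemma connected_minimal_meeting_mut_zero_limits:
  fixes pop :: "'s::finite \<Rightarrow> 'i"
  assumes "compact X"
    and meets: "\<And>m. m \<in> mutation_targets pop \<Longrightarrow> X \<inter> mut_zero_limits pop f m \<noteq> {}"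
    and minimal: "\<And>Y. Y \<subseteq> X \<Longrightarrow> Y \<noteq> {} \<Longrightarrow> compact Y \<Longrightarrow>
                   (\<forall>m\<in>mutation_targets pop. Y \<inter> mut_zero_limits pop f m \<noteq> {}) \<Longrightarrow> Y = X"
  shows "connected X"
proof -
  have "\<not> (closed A \<and> closed B \<and> A \<noteq> {} \<and> B \<noteq> {} \<and> A \<union> B = X \<and> A \<inter> B = {})" for A B
  proof (rule notI, elim conjE)
    assume AB: "closed A" "closed B" "A \<noteq> {}" "B \<noteq> {}" "A \<union> B = X" "A \<inter> B = {}"
    have "compact (X \<inter> A)" "compact (X \<inter> B)"
      using \<open>compact X\<close> AB(1,2) by (simp_all add: compact_Int_closed)
    moreover have "X \<inter> A = A" "X \<inter> B = B"
      using AB(5) by blast+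
    ultimately have "compact A" "compact B"
      by simp_all
    obtain m1 where m1: "m1 \<in> mutation_targets pop" "A \<inter> mut_zero_limits pop f m1 = {}"
      using minimal[of A] AB(3-6) \<open>compact A\<close> by blast
    obtain m2 where m2: "m2 \<in> mutation_targets pop" "B \<inter> mut_zero_limits pop f m2 = {}"
      using minimal[of B] AB(3-6) \<open>compact B\<close> by blast
    obtain m where "m \<in> mutation_targets pop"
      "A \<inter> mut_zero_limits pop f m \<subseteq> mut_zero_limits pop f m1"
      "B \<inter> mut_zero_limits pop f m \<subseteq> mut_zero_limits pop f m2"
      using mut_zero_limits_glue[OF m1(1) m2(1) \<open>compact A\<close> AB(2-4,6)] by blast
    then show False
      using meets[of m] m1(2) m2(2) AB(5) by blast
  qed
  then show ?thesis
    using connected_closed_set[OF compact_imp_closed[OF \<open>compact X\<close>]] by blast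
qed

lemma exists_connected_approachable_nash_subset:
  fixes pop :: "'s::finite \<Rightarrow> 'i"
  assumes "surj pop" and f: "continuous_on (pstate pop) f"
  obtains X0 where "X0 \<subseteq> nash_set pop f" "compact X0" "connected X0" "approachable pop f X0"
proof -
  let ?\<L> = "mut_zero_limits pop f ` mutation_targets pop"
  have meets_nash: "nash_set pop f \<inter> L \<noteq> {}" if "L \<in> ?\<L>" for L
    using that mut_zero_limits_meets_nash_set[OF \<open>surj pop\<close> f] by blast
  have "nash_set pop f \<noteq> {}"
    using meets_nash const_in_mutation_targets[OF uniform_state_in_pstate_int[OF \<open>surj pop\<close>]]
    by blast
  obtain X0 where X0: "X0 \<subseteq> nash_set pop f" "compact X0" "\<And>L. L \<in> ?\<L> \<Longrightarrow> X0 \<inter> L \<noteq> {}"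
    and minimal: "\<And>Y. Y \<subseteq> X0 \<Longrightarrow> Y \<noteq> {} \<Longrightarrow> compact Y \<Longrightarrow> (\<forall>L\<in>?\<L>. Y \<inter> L \<noteq> {}) \<Longrightarrow> Y = X0"
    by (rule exists_minimal_compact_meeting[where Q = "\<lambda>_. True" and \<L> = ?\<L>,
          OF compact_nash_set[OF f] \<open>nash_set pop f \<noteq> {}\<close>])
      (use meets_nash closed_mut_zero_limits in auto)
  have "connected X0"
    using X0 minimal by (intro connected_minimal_meeting_mut_zero_limits) auto
  moreover have "approachable pop f X0"
    using X0(3) const_in_mutation_targets by (auto simp: approachable_iff_meets_mut_zero_limits)
  ultimately show ?thesis
    using that X0(1,2) by blast
qed

lemma mutation_limit_within:
  fixes pop :: "'s::finite \<Rightarrow> 'i"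
  assumes "surj pop" "compact K" "connected K" "K \<subseteq> pstate pop" "approachable pop f K"
  obtains X where "mutation_limit pop f X" "X \<subseteq> K"
proof -
  let ?\<L> = "(\<lambda>c. mut_zero_limits pop f (\<lambda>_. c)) ` pstate_int pop"
  have approachable_iff: "approachable pop f Y \<longleftrightarrow> (\<forall>L\<in>?\<L>. Y \<inter> L \<noteq> {})" for Y
    by (simp add: approachable_iff_meets_mut_zero_limits)
  have nonempty: "Y \<noteq> {}" if "approachable pop f Y" for Y
    using that pstate_int_nonempty[OF \<open>surj pop\<close>] by (auto simp: approachable_iff)
  obtain X where X: "X \<subseteq> K" "compact X" "connected X" "\<And>L. L \<in> ?\<L> \<Longrightarrow> X \<inter> L \<noteq> {}"
    and minimal: "\<And>Y. Y \<subseteq> X \<Longrightarrow> Y \<noteq> {} \<Longrightarrow> compact Y \<Longrightarrow> connected Y \<Longrightarrow>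
                      (\<forall>L\<in>?\<L>. Y \<inter> L \<noteq> {}) \<Longrightarrow> Y = X"
  proof (rule exists_minimal_compact_meeting[where Q = connected and \<L> = ?\<L>])
    show "K \<noteq> {}" using nonempty \<open>approachable pop f K\<close> .
    show "K \<inter> L \<noteq> {}" if "L \<in> ?\<L>" for L
      using that \<open>approachable pop f K\<close> by (auto simp: approachable_iff)
    show "connected (\<Inter>\<F>)"
      if "\<F> \<noteq> {}" "\<And>S. S \<in> \<F> \<Longrightarrow> compact S \<and> connected S"
        "\<And>S T. S \<in> \<F> \<Longrightarrow> T \<in> \<F> \<Longrightarrow> S \<subseteq> T \<or> T \<subseteq> S" for \<F> :: "(real^'s) set set"
    proof -
      obtain S where "S \<in> \<F>" using \<open>\<F> \<noteq> {}\<close> by blast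
      then show ?thesis
        using that(2,3) by (intro connected_chain_gen[of S]) (auto intro: compact_imp_closed)
    qed
  qed (use assms closed_mut_zero_limits in auto)
  have "mutation_limit pop f X"
    unfolding mutation_limit_def
  proof (intro conjI allI impI)
    show "approachable pop f X"
      using X(4) by (simp add: approachable_iff)
    then show "X \<noteq> {}" by (rule nonempty)
    show "connected X" "compact X" "X \<subseteq> pstate pop"
      using X assms(4) by auto
    show "\<not> approachable pop f Y" if "Y \<subset> X \<and> connected Y \<and> compact Y" for Y
      using that minimal[of Y] nonempty[of Y] by (auto simp: approachable_iff)
  qed
  with X(1) show ?thesis
    using that by blast
qed

theorem mainTheorem7:
  fixes pop :: "'s::finite \<Rightarrow> 'i"
    and f :: "real^'s \<Rightarrow> real^'s"
    and f' :: "real^'s \<Rightarrow> ((real^'s) \<Rightarrow>\<^sub>L (real^'s))"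
    and U :: "(real^'s) set"
  assumes "surj pop"
    and "open U" and "pstate pop \<subseteq> U"
    and "\<And>x. x \<in> U \<Longrightarrow> (f has_derivative blinfun_apply (f' x)) (at x)"
    and "continuous_on U f'"
  shows "\<exists>X. mutation_limit pop f X \<and> (\<exists>C \<in> components (nash_set pop f). X \<subseteq> C)"
proof -
  have f: "continuous_on (pstate pop) f"
    using assms(3,4) by (intro continuous_at_imp_continuous_on ballI has_derivative_continuous) blast
  obtain X0 where X0: "X0 \<subseteq> nash_set pop f" "compact X0" "connected X0" "approachable pop f X0"
    using exists_connected_approachable_nash_subset[OF \<open>surj pop\<close> f] by blast
  moreover have "X0 \<subseteq> pstate pop"
    using X0(1) by (auto simp: nash_set_def)
  ultimately obtain X where X: "mutation_limit pop f X" "X \<subseteq> X0"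
    using mutation_limit_within[OF \<open>surj pop\<close>] by blast
  then have "connected X" "X \<subseteq> nash_set pop f" "nash_set pop f \<noteq> {}"
    using X0(1) by (auto simp: mutation_limit_def)
  then show ?thesis
    using X(1) exists_component_superset[of X "nash_set pop f"] by blast
qed

end
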